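(* Let $d>0$ be a constant, $k,b:\mathbb{R}_+\to\mathbb{R}_+$ measurable and bounded with $\int_0^{+\infty}k(a)da=+\infty$ and $1<\int_0^{+\infty}b(a)e^{-\int_0^ak(u)du}da<+\infty$. Let $\eta_1,\eta_2,c_1,c_2,\tilde c_1,\tilde c_2\ge0$, $c_1^{tot}=\eta_1+c_1>0$, $c_2^{tot}=\eta_2+c_2$. Consider the PDE–ODE system $$\partial_tn_1+\partial_an_1=-\big(k(a)+c_1^{tot}N_1(t)+c_2^{tot}N_2(t)\big)n_1,\qquad n_1(t,0)=\int_0^{+\infty}b(a)n_1(t,a)da,$$ $$\frac{dN_2}{dt}=-\big(d+\tilde c_1N_1+\tilde c_2N_2\big)N_2+\int_0^{+\infty}\big(k(a)+\eta_1N_1+\eta_2N_2\big)n_1(t,a)da,\qquad N_1(t)=\int_0^{+\infty}n_1(t,a)da.$$ Then this system has a unique non-trivial nonnegative steady state $(n_1^*,N_2^* )$ (with $n_1^*\in L^1(\mathbb{R}_+)$). Furthermore, if $d>0$ or $\tilde c_2>0$, then $N_1^*=\int_0^{+\infty}n_1^*(a)da>0$, and if $k\not\equiv0$ or $\eta_1>0$, then $N_2^*>0$.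
   Context: A steady state is a time-independent solution $(n_1^*(a),N_2^* )$; non-trivial means different from $(0,0)$. *)

theory Defs
  imports "HOL-Analysis.Analysis"
begin

definition tot :: "(real \<Rightarrow> real) \<Rightarrow> real" where
  "tot n1 = (\<integral>a\<in>{0..}. n1 a \<partial>lborel)"

text \<open>The age-transport equation  n1'(a) = -(k(a) + c1tot N1 + c2tot N2) n1(a)  is imposed in
  integrated (absolutely continuous) form on [0,infty), together with the renewal boundary
  condition and the stationary ODE for N2. Parameters: k b d eta1 eta2 c1 c2 ct1 ct2,
  where ct1, ct2 are tilde c1, tilde c2.\<close>
definition is_steady_state ::
  "(real \<Rightarrow> real) \<Rightarrow> (real \<Rightarrow> real) \<Rightarrow> real \<Rightarrow> real \<Rightarrow> real \<Rightarrow> real \<Rightarrow> real \<Rightarrow> real \<Rightarrow> real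
   \<Rightarrow> (real \<Rightarrow> real) \<Rightarrow> real \<Rightarrow> bool" where
  "is_steady_state k b d eta1 eta2 c1 c2 ct1 ct2 n1 N2 \<longleftrightarrow>
     set_integrable lborel {0..} n1 \<and>
     (\<forall>a\<ge>0. n1 a = n1 0 -
        (\<integral>u\<in>{0..a}. (k u + (eta1 + c1) * tot n1 + (eta2 + c2) * N2) * n1 u \<partial>lborel)) \<and>
     n1 0 = (\<integral>a\<in>{0..}. b a * n1 a \<partial>lborel) \<and>
     0 = - (d + ct1 * tot n1 + ct2 * N2) * N2
         + (\<integral>a\<in>{0..}. (k a + eta1 * tot n1 + eta2 * N2) * n1 a \<partial>lborel)"

definition nonneg_nontrivial :: "(real \<Rightarrow> real) \<Rightarrow> real \<Rightarrow> bool" where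
  "nonneg_nontrivial n1 N2 \<longleftrightarrow>
     (\<forall>a\<ge>0. n1 a \<ge> 0) \<and> N2 \<ge> 0 \<and> \<not> ((\<forall>a\<ge>0. n1 a = 0) \<and> N2 = 0)"

end

theory Submission
  imports Defs "HOL-Real_Asymp.Real_Asymp"
begin

(* A steady state n1 solves the linear Volterra equation n1(a) = n1(0) - int_0^a (k + l) n1 with the
   constant l = (eta1 + c1) N1 + (eta2 + c2) N2, so a Gronwall argument gives
   n1(a) = n1(0) exp (-K(a) - l a), where K(a) = int_0^a k.  If n1(0) = 0, the N2-equation forces
   N2 = 0.  Otherwise the renewal condition reads F(l) = 1 for the Laplace transform F of the net
   maternity b exp(-K); F is continuous and strictly decreasing from F(0) = R0 > 1 to 0, so l is a
   unique lambda > 0.  Then (N1, N2) lies on the segment (eta1 + c1) N1 + (eta2 + c2) N2 = lambda,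
   along which the N2-equation is a quadratic in N2, negative at N2 = 0 and positive at the other
   end; it has exactly one admissible root. *)

lemma const_if_increments_quadratic:
  fixes f :: "real \<Rightarrow> real"
  assumes incr: "\<And>x y. 0 \<le> x \<Longrightarrow> x \<le> y \<Longrightarrow> \<bar>f y - f x\<bar> \<le> C * (y - x)^2"
    and a: "0 \<le> a"
  shows "f a = f 0"
proof -
  have C: "0 \<le> C" using incr[of 0 1] by simp
  have bound: "\<bar>f a - f 0\<bar> * real n \<le> C * a^2" if n: "n \<ge> 1" for n :: nat
  proof -
    define h where "h = a / real n"
    have hn: "h * real n = a" using n by (simp add: h_def)
    have h: "0 \<le> h" using a by (simp add: h_def)
    have "f a - f 0 = (\<Sum>i<n. f (h * real (Suc i)) - f (h * real i))"
      by (subst sum_lessThan_telescope[where f="\<lambda>i. f (h * real i)"]) (simp add: hn)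
    also have "\<bar>\<dots>\<bar> \<le> (\<Sum>i<n. \<bar>f (h * real (Suc i)) - f (h * real i)\<bar>)"
      by (rule sum_abs)
    also have "\<dots> \<le> (\<Sum>i<n. C * h^2)"
    proof (rule sum_mono)
      fix i
      have "\<bar>f (h * real (Suc i)) - f (h * real i)\<bar> \<le> C * (h * real (Suc i) - h * real i)^2"
        by (rule incr) (use h in \<open>auto intro: mult_left_mono\<close>)
      then show "\<bar>f (h * real (Suc i)) - f (h * real i)\<bar> \<le> C * h^2"
        by (simp add: algebra_simps)
    qed
    also have "\<dots> = C * a^2 / real n" using n by (simp add: h_def power2_eq_square field_simps)
    finally show ?thesis using n by (simp add: field_simps)
  qed
  show ?thesis
  proof (rule ccontr)
    assume "f a \<noteq> f 0"
    then have pos: "\<bar>f a - f 0\<bar> > 0" by simp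
    obtain n :: nat where n: "n > C * a^2 / \<bar>f a - f 0\<bar>" using reals_Archimedean2 by blast
    moreover have "0 \<le> C * a^2 / \<bar>f a - f 0\<bar>" using C pos by simp
    ultimately have "n \<ge> 1" by linarith
    with bound have "\<bar>f a - f 0\<bar> * real n \<le> C * a^2" by blast
    with n pos show False by (simp add: field_simps)
  qed
qed

lemma set_integrable_bounded_Icc:
  fixes f :: "real \<Rightarrow> real"
  assumes "f \<in> borel_measurable borel" "\<And>x. \<bar>f x\<bar> \<le> M"
  shows "set_integrable lborel {x..y} f"
  unfolding set_integrable_def
  by (rule integrableI_bounded_set_indicator[where B=M])
     (use assms in \<open>auto simp: emeasure_lborel_Icc_eq\<close>)

lemma
  fixes f :: "real \<Rightarrow> real"
  assumes "f \<in> borel_measurable borel" "\<And>x. \<bar>f x\<bar> \<le> M"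
  shows set_integral_Icc_eq_integral_bounded: "(LINT u:{x..y}|lborel. f u) = integral {x..y} f"
    and integrable_on_Icc_bounded: "f integrable_on {x..y}"
  using set_borel_integral_eq_integral[OF set_integrable_bounded_Icc[OF assms]] by auto

lemma set_integrable_bounded_mult:
  fixes f n :: "real \<Rightarrow> real"
  assumes n: "set_integrable lborel A n" and f[measurable]: "f \<in> borel_measurable borel"
    and f_le: "\<And>x. \<bar>f x\<bar> \<le> C" and A[measurable]: "A \<in> sets borel"
  shows "set_integrable lborel A (\<lambda>x. f x * n x)"
proof (rule set_integrable_bound[where f="\<lambda>x. C * n x"])
  show "set_integrable lborel A (\<lambda>x. C * n x)" using n by (rule set_integrable_mult_right)
  have "(\<lambda>x. indicator A x *\<^sub>R n x) \<in> borel_measurable lborel"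
    using n unfolding set_integrable_def by (rule borel_measurable_integrable)
  then have "(\<lambda>x. f x * (indicator A x *\<^sub>R n x)) \<in> borel_measurable borel" by simp
  then show "set_borel_measurable lborel A (\<lambda>x. f x * n x)"
    unfolding set_borel_measurable_def by (simp add: algebra_simps)
  have "0 \<le> C" using f_le[of undefined] by simp
  then show "AE x in lborel. x \<in> A \<longrightarrow> norm (f x * n x) \<le> norm (C * n x)"
    using f_le by (intro AE_I2) (simp add: abs_mult mult_right_mono)
qed

lemma set_integral_mono_set_nonneg:
  fixes n :: "real \<Rightarrow> real"
  assumes "set_integrable lborel A n" "B \<subseteq> A" "B \<in> sets borel" "\<And>x. 0 \<le> n x"
  shows "(LINT x:B|lborel. n x) \<le> (LINT x:A|lborel. n x)"
proof -
  have "set_integrable lborel B n" by (rule set_integrable_subset[OF assms(1)]) (use assms in auto)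
  then show ?thesis
    using assms unfolding set_lebesgue_integral_def set_integrable_def
    by (intro integral_mono) (auto simp: indicator_def)
qed

lemma set_integrable_exp_neg_halfline:
  fixes l :: real
  assumes l: "0 < l"
  shows "set_integrable lborel {0..} (\<lambda>x. exp (- l * x))"
proof -
  have "set_integrable lebesgue {0..} (\<lambda>x. exp (- l * x))"
    by (rule nonnegative_absolutely_integrable_1[OF integrable_on_exp_minus_to_infinity[OF l]]) simp
  then show ?thesis unfolding set_integrable_def
    by (subst (asm) integrable_completion) auto
qed

text \<open>Iterating the inequality gives \<open>\<bar>m a\<bar> \<le> B (M a)^j / j!\<close> for every \<open>j\<close>.\<close>
lemma volterra_inequality_imp_zero:
  fixes m :: "real \<Rightarrow> real"
  assumes m[measurable]: "(\<lambda>x. indicator {0..} x * m x) \<in> borel_measurable borel"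
    and bounded: "\<And>a. 0 \<le> a \<Longrightarrow> \<bar>m a\<bar> \<le> B"
    and volterra: "\<And>a. 0 \<le> a \<Longrightarrow> \<bar>m a\<bar> \<le> M * (LINT u:{0..a}|lborel. \<bar>m u\<bar>)"
    and M: "0 \<le> M" and a: "0 \<le> a"
  shows "m a = 0"
proof -
  have integrable: "set_integrable lborel {0..a} (\<lambda>u. \<bar>m u\<bar>)" if "0 \<le> a" for a
  proof -
    have "(\<lambda>x. indicator {0..a} x *\<^sub>R \<bar>m x\<bar>)
        = (\<lambda>x. indicator {0..a} x *\<^sub>R \<bar>indicator {0..} x * m x\<bar>)"
      by (auto simp: indicator_def)
    then show ?thesis unfolding set_integrable_def
      by (simp only:) (rule integrableI_bounded_set_indicator[where B=B], use bounded that in auto)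
  qed
  have iterate: "\<bar>m a\<bar> \<le> B * M ^ j * a ^ j / fact j" if "0 \<le> a" for j a
    using that
  proof (induction j arbitrary: a)
    case 0 then show ?case using bounded by simp
  next
    case (Suc j)
    have "(LINT u:{0..a}|lborel. \<bar>m u\<bar>) \<le> (LINT u:{0..a}|lborel. (B * M ^ j / fact j) * u ^ j)"
      by (rule set_integral_mono[OF integrable[OF Suc.prems] borel_integrable_atLeastAtMost'])
         (use Suc.IH in auto, auto intro!: continuous_intros)
    also have "\<dots> = (B * M ^ j / fact j) * (a ^ Suc j / Suc j)"
      using integral_power[of 0 a j] Suc.prems
      by (simp add: set_lebesgue_integral_def mult.commute)
    finally have "\<bar>m a\<bar> \<le> M * ((B * M ^ j / fact j) * (a ^ Suc j / Suc j))"
      using volterra[OF Suc.prems] M by (meson mult_left_mono order.trans)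
    then show ?case by (simp add: field_simps)
  qed
  have "(\<lambda>j. B * (inverse (fact j) * (M * a) ^ j)) \<longlonglongrightarrow> B * 0"
    by (intro tendsto_mult tendsto_const summable_LIMSEQ_zero summable_exp)
  moreover have "\<bar>m a\<bar> \<le> B * (inverse (fact j) * (M * a) ^ j)" for j
    using iterate[OF a, of j] by (simp add: power_mult_distrib field_simps)
  ultimately have "\<bar>m a\<bar> \<le> 0"
    by (intro LIMSEQ_le_const[where X="\<lambda>j. B * (inverse (fact j) * (M * a) ^ j)"]) auto
  then show ?thesis by simp
qed

lemma exp_neg_le_quadratic:
  fixes D :: real
  assumes "0 \<le> D"
  shows "exp (- D) \<le> 1 - D + D^2"
proof -
  have "exp (- D) \<le> 1 / (1 + D)"
    using exp_ge_add_one_self[of D] assms by (simp add: exp_minus field_simps)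
  also have "\<dots> \<le> 1 - D + D^2"
    using assms by (simp add: field_simps power2_eq_square)
  finally show ?thesis .
qed

section \<open>Survival under a bounded measurable hazard rate\<close>

locale bounded_hazard =
  fixes g :: "real \<Rightarrow> real" and M :: real
  assumes measurable_g[measurable]: "g \<in> borel_measurable borel"
    and g_nonneg: "\<And>x. 0 \<le> g x" and g_le: "\<And>x. g x \<le> M"
begin

definition cumhaz :: "real \<Rightarrow> real" where
  "cumhaz a = (LINT u:{0..a}|lborel. g u)"

definition surv :: "real \<Rightarrow> real" where
  "surv a = exp (- cumhaz a)"

definition dens :: "real \<Rightarrow> real" where
  "dens a = g a * surv a"

definition cdf :: "real \<Rightarrow> real" where
  "cdf a = (LINT u:{0..a}|lborel. dens u)"

lemma abs_g_le: "\<bar>g x\<bar> \<le> M"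
  using g_nonneg[of x] g_le[of x] by simp

lemma M_nonneg: "0 \<le> M"
  using g_nonneg[of 0] g_le[of 0] by simp

lemma g_integrable_on: "g integrable_on {x..y}"
  by (rule integrable_on_Icc_bounded[OF measurable_g abs_g_le])

lemma integral_g_nonneg: "0 \<le> integral {x..y} g"
  by (rule integral_nonneg[OF g_integrable_on]) (use g_nonneg in auto)

lemma integral_g_le: "x \<le> y \<Longrightarrow> integral {x..y} g \<le> M * (y - x)"
  using integral_le[OF g_integrable_on integrable_const_ivl, of x y M] g_le by (simp add: mult.commute)

lemma cumhaz_eq_integral: "cumhaz a = integral {0..a} g"
  unfolding cumhaz_def by (rule set_integral_Icc_eq_integral_bounded[OF measurable_g abs_g_le])

lemma cumhaz_nonneg: "0 \<le> cumhaz a"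
  by (simp add: cumhaz_eq_integral integral_g_nonneg)

lemma cumhaz_nonpos_eq_0: "a \<le> 0 \<Longrightarrow> cumhaz a = 0"
  unfolding cumhaz_eq_integral by (cases "a = 0") auto

lemma cumhaz_add: "0 \<le> x \<Longrightarrow> x \<le> y \<Longrightarrow> cumhaz y = cumhaz x + integral {x..y} g"
  unfolding cumhaz_eq_integral using Henstock_Kurzweil_Integration.integral_combine[OF _ _ g_integrable_on, of 0 x y] by simp

lemma mono_cumhaz: "mono cumhaz"
proof (rule monoI)
  fix x y :: real
  assume xy: "x \<le> y"
  show "cumhaz x \<le> cumhaz y"
  proof (cases "x \<le> 0")
    case True
    then show ?thesis using cumhaz_nonpos_eq_0[of x] cumhaz_nonneg[of y] by simp
  next
    case False
    then show ?thesis using cumhaz_add[OF _ xy] integral_g_nonneg[of x y] by simp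
  qed
qed

lemma borel_measurable_cumhaz[measurable]: "cumhaz \<in> borel_measurable borel"
  by (rule borel_measurable_mono[OF mono_cumhaz])

lemma surv_pos: "0 < surv a"
  by (simp add: surv_def)

lemma surv_le_1: "surv a \<le> 1"
  using cumhaz_nonneg[of a] by (simp add: surv_def)

lemma abs_surv_le_1: "\<bar>surv a\<bar> \<le> 1"
  using surv_pos[of a] surv_le_1[of a] by simp

lemma surv_0: "surv 0 = 1"
  by (simp add: surv_def cumhaz_nonpos_eq_0)

lemma surv_antimono: "x \<le> y \<Longrightarrow> surv y \<le> surv x"
  using mono_cumhaz by (simp add: surv_def mono_def)

lemma surv_increment:
  assumes "0 \<le> x" "x \<le> y"
  shows "surv y = surv x * exp (- integral {x..y} g)"
  by (simp add: surv_def cumhaz_add[OF assms] exp_add[symmetric])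

lemma borel_measurable_surv[measurable]: "surv \<in> borel_measurable borel"
  unfolding surv_def by measurable

lemma borel_measurable_dens[measurable]: "dens \<in> borel_measurable borel"
  unfolding dens_def by measurable

lemma abs_dens_le: "\<bar>dens u\<bar> \<le> M"
proof -
  have "\<bar>dens u\<bar> = g u * surv u" using g_nonneg[of u] surv_pos[of u] by (simp add: dens_def)
  also have "\<dots> \<le> g u" using g_nonneg[of u] surv_le_1[of u] by (simp add: mult_left_le)
  finally show ?thesis using g_le[of u] by simp
qed

lemma dens_integrable_on: "dens integrable_on {x..y}"
  by (rule integrable_on_Icc_bounded[OF borel_measurable_dens abs_dens_le])

lemma cdf_eq_integral: "cdf a = integral {0..a} dens"
  unfolding cdf_def by (rule set_integral_Icc_eq_integral_bounded[OF borel_measurable_dens abs_dens_le])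

lemma cdf_0: "cdf 0 = 0"
  by (simp add: cdf_eq_integral)

lemma cdf_increment_bounds:
  assumes "0 \<le> x" "x \<le> y"
  shows "surv y * integral {x..y} g \<le> cdf y - cdf x"
    and "cdf y - cdf x \<le> surv x * integral {x..y} g"
proof -
  have diff: "cdf y - cdf x = integral {x..y} dens"
    using Henstock_Kurzweil_Integration.integral_combine[OF _ _ dens_integrable_on, of 0 x y] assms by (simp add: cdf_eq_integral)
  have "integral {x..y} (\<lambda>u. g u * surv y) \<le> integral {x..y} dens"
    by (rule integral_le[OF integrable_on_mult_left[OF g_integrable_on] dens_integrable_on])
       (simp add: dens_def mult_left_mono[OF surv_antimono g_nonneg])
  then show "surv y * integral {x..y} g \<le> cdf y - cdf x"
    by (simp add: diff ac_simps)
  have "integral {x..y} dens \<le> integral {x..y} (\<lambda>u. g u * surv x)"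
    by (rule integral_le[OF dens_integrable_on integrable_on_mult_left[OF g_integrable_on]])
       (simp add: dens_def mult_left_mono[OF surv_antimono g_nonneg])
  then show "cdf y - cdf x \<le> surv x * integral {x..y} g"
    by (simp add: diff ac_simps)
qed

lemma surv_plus_cdf_increment:
  assumes x: "0 \<le> x" and xy: "x \<le> y"
  shows "\<bar>(surv y + cdf y) - (surv x + cdf x)\<bar> \<le> M^2 * (y - x)^2"
proof -
  define D where "D = integral {x..y} g"
  define s where "s = surv x"
  define e where "e = exp (- D)"
  have D: "0 \<le> D" "D \<le> M * (y - x)" using integral_g_nonneg integral_g_le[OF xy] by (simp_all add: D_def)
  have s: "0 < s" "s \<le> 1" using surv_pos surv_le_1 by (simp_all add: s_def)
  have sy: "surv y = s * e" using surv_increment[OF x xy] by (simp add: s_def e_def D_def)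
  have cdf: "s * e * D \<le> cdf y - cdf x" "cdf y - cdf x \<le> s * D"
    using cdf_increment_bounds[OF x xy] sy by (simp_all add: s_def D_def)
  have "e \<le> 1 - D + D^2" using exp_neg_le_quadratic[OF D(1)] by (simp add: e_def)
  then have up: "s * (e - 1 + D) \<le> s * D^2" using s by (intro mult_left_mono) auto
  have "(1 - D) * (1 + D) \<le> e * (1 + D)"
    using exp_ge_add_one_self[of "- D"] D by (intro mult_right_mono) (auto simp: e_def)
  then have "- (D^2) \<le> e * (1 + D) - 1" by (simp add: algebra_simps power2_eq_square)
  then have lo: "s * (- (D^2)) \<le> s * (e * (1 + D) - 1)" using s by (intro mult_left_mono) auto
  have sD: "s * D^2 \<le> D^2" using s by (simp add: mult_left_le_one_le)
  have diff: "(surv y + cdf y) - (surv x + cdf x) = s * e - s + (cdf y - cdf x)"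
    using sy by (simp add: s_def)
  have "s * e - s + (cdf y - cdf x) \<le> s * (e - 1 + D)"
    using cdf(2) by (simp add: algebra_simps)
  with up sD have "(surv y + cdf y) - (surv x + cdf x) \<le> D^2"
    unfolding diff by linarith
  moreover have "s * (e * (1 + D) - 1) \<le> s * e - s + (cdf y - cdf x)"
    using cdf(1) by (simp add: algebra_simps)
  with lo sD have "- (D^2) \<le> (surv y + cdf y) - (surv x + cdf x)"
    unfolding diff by linarith
  ultimately have "\<bar>(surv y + cdf y) - (surv x + cdf x)\<bar> \<le> D^2"
    by (intro abs_leI; linarith)
  also have "D^2 \<le> (M * (y - x))^2" using D by (intro power_mono) auto
  finally show ?thesis by (simp add: power_mult_distrib)
qed

text \<open>The hazard \<open>g\<close> is only measurable, so the chain rule is not available for \<open>surv\<close>;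
  instead, \<open>surv + cdf\<close> is constant because its increments are quadratically small.\<close>
lemma surv_eq_1_minus_cdf:
  assumes "0 \<le> a"
  shows "surv a = 1 - cdf a"
proof -
  have "surv a + cdf a = surv 0 + cdf 0"
    by (rule const_if_increments_quadratic[where f="\<lambda>a. surv a + cdf a", OF surv_plus_cdf_increment assms])
  then show ?thesis using surv_0 cdf_0 by linarith
qed

lemma volterra_solution_bounded:
  fixes n :: "real \<Rightarrow> real"
  assumes n: "set_integrable lborel {0..} n"
    and volterra: "\<And>a. 0 \<le> a \<Longrightarrow> n a = n 0 - (LINT u:{0..a}|lborel. g u * n u)"
    and a: "0 \<le> a"
  shows "\<bar>n a\<bar> \<le> \<bar>n 0\<bar> + M * (LINT x:{0..}|lborel. \<bar>n x\<bar>)"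
proof -
  have n_Icc: "set_integrable lborel {0..a} n"
    by (rule set_integrable_subset[OF n]) auto
  have gn: "set_integrable lborel {0..a} (\<lambda>u. g u * n u)"
    by (rule set_integrable_bounded_mult[OF n_Icc measurable_g abs_g_le]) auto
  have "\<bar>LINT u:{0..a}|lborel. g u * n u\<bar> \<le> (LINT u:{0..a}|lborel. \<bar>g u * n u\<bar>)"
    using set_integral_norm_bound[OF gn] by simp
  also have "\<dots> \<le> (LINT u:{0..a}|lborel. M * \<bar>n u\<bar>)"
    by (rule set_integral_mono[OF set_integrable_abs[OF gn]
          set_integrable_mult_right[OF set_integrable_abs[OF n_Icc]]])
       (simp add: abs_mult mult_right_mono abs_g_le)
  also have "\<dots> \<le> M * (LINT x:{0..}|lborel. \<bar>n x\<bar>)"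
    unfolding set_integral_mult_right
    by (rule mult_left_mono[OF set_integral_mono_set_nonneg[OF set_integrable_abs[OF n]] M_nonneg])
       auto
  finally show ?thesis using volterra[OF a] by linarith
qed

text \<open>The difference of \<open>n\<close> and \<open>n 0 * surv\<close> is bounded and solves the homogeneous equation.\<close>
lemma volterra_solution_eq_surv:
  fixes n :: "real \<Rightarrow> real"
  assumes n: "set_integrable lborel {0..} n"
    and volterra: "\<And>a. 0 \<le> a \<Longrightarrow> n a = n 0 - (LINT u:{0..a}|lborel. g u * n u)"
    and a: "0 \<le> a"
  shows "n a = n 0 * surv a"
proof -
  define m where "m x = n x - n 0 * surv x" for x
  have m_Icc: "set_integrable lborel {0..b} m" for b
    unfolding m_def
    by (rule set_integral_diff(1)[OF set_integrable_subset[OF n] set_integrable_mult_right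
          [OF set_integrable_bounded_Icc[OF borel_measurable_surv abs_surv_le_1]]]) auto
  have homogeneous: "m b = - (LINT u:{0..b}|lborel. g u * m u)" if b: "0 \<le> b" for b
  proof -
    have gn: "set_integrable lborel {0..b} (\<lambda>u. g u * n u)"
      by (rule set_integrable_bounded_mult[OF set_integrable_subset[OF n] measurable_g abs_g_le]) auto
    have dens: "set_integrable lborel {0..b} (\<lambda>u. n 0 * dens u)"
      by (rule set_integrable_mult_right[OF set_integrable_bounded_Icc[OF _ abs_dens_le]]) simp
    have "(LINT u:{0..b}|lborel. g u * m u) = (LINT u:{0..b}|lborel. g u * n u - n 0 * dens u)"
      by (rule set_lebesgue_integral_cong) (auto simp: m_def dens_def algebra_simps)
    also have "\<dots> = (LINT u:{0..b}|lborel. g u * n u) - n 0 * cdf b"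
      by (simp add: set_integral_diff(2)[OF gn dens] cdf_def)
    finally have "(LINT u:{0..b}|lborel. g u * m u) = (LINT u:{0..b}|lborel. g u * n u) - n 0 * cdf b" .
    moreover have "n 0 * surv b = n 0 - n 0 * cdf b"
      using surv_eq_1_minus_cdf[OF b] by (simp add: right_diff_distrib)
    moreover have "m b = n b - n 0 * surv b" by (simp add: m_def)
    ultimately show ?thesis using volterra[OF b] by linarith
  qed
  show ?thesis
  proof -
    have "m a = 0"
    proof (rule volterra_inequality_imp_zero[OF _ _ _ M_nonneg a])
      have "(\<lambda>x. indicator {0..} x * n x - n 0 * (indicator {0..} x * surv x)) \<in> borel_measurable borel"
        using borel_measurable_integrable[OF n[unfolded set_integrable_def]] by simp
      then show "(\<lambda>x. indicator {0..} x * m x) \<in> borel_measurable borel"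
        by (simp add: m_def algebra_simps)
      show "\<bar>m b\<bar> \<le> 2 * \<bar>n 0\<bar> + M * (LINT x:{0..}|lborel. \<bar>n x\<bar>)" if "0 \<le> b" for b
        proof -
        have "\<bar>n 0 * surv b\<bar> \<le> \<bar>n 0\<bar>"
          using abs_surv_le_1[of b] by (simp add: abs_mult mult_left_le)
        then show ?thesis using volterra_solution_bounded[OF n volterra that] by (simp add: m_def)
      qed
      show "\<bar>m b\<bar> \<le> M * (LINT u:{0..b}|lborel. \<bar>m u\<bar>)" if b: "0 \<le> b" for b
      proof -
        have gm: "set_integrable lborel {0..b} (\<lambda>u. g u * m u)"
          by (rule set_integrable_bounded_mult[OF m_Icc measurable_g abs_g_le]) auto
        have "\<bar>m b\<bar> \<le> (LINT u:{0..b}|lborel. \<bar>g u * m u\<bar>)"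
          using set_integral_norm_bound[OF gm] homogeneous[OF b] by simp
        also have "\<dots> \<le> (LINT u:{0..b}|lborel. M * \<bar>m u\<bar>)"
          by (rule set_integral_mono[OF set_integrable_abs[OF gm]
                set_integrable_mult_right[OF set_integrable_abs[OF m_Icc]]])
             (simp add: abs_mult mult_right_mono abs_g_le)
        finally show ?thesis by simp
      qed
    qed
    then show ?thesis by (simp add: m_def)
  qed
qed

lemma surv_le_exp:
  assumes "\<And>x. l \<le> g x" "0 \<le> a"
  shows "surv a \<le> exp (- l * a)"
proof -
  have "integral {0..a} (\<lambda>_. l) \<le> integral {0..a} g"
    by (rule integral_le[OF integrable_const_ivl g_integrable_on]) (simp add: assms(1))
  then show ?thesis using assms(2) by (simp add: surv_def cumhaz_eq_integral mult.commute)
qed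

lemma set_integrable_surv:
  assumes l: "0 < l" and le_g: "\<And>x. l \<le> g x"
  shows "set_integrable lborel {0..} surv"
proof (rule set_integrable_bound[OF set_integrable_exp_neg_halfline[OF l]])
  show "set_borel_measurable lborel {0..} surv"
    unfolding set_borel_measurable_def by measurable
  show "AE x in lborel. x \<in> {0..} \<longrightarrow> norm (surv x) \<le> norm (exp (- l * x))"
    using surv_le_exp[OF le_g] by (intro AE_I2) (simp add: abs_of_pos[OF surv_pos])
qed

lemma integral_dens_halfline:
  assumes l: "0 < l" and le_g: "\<And>x. l \<le> g x"
  shows "(LINT a:{0..}|lborel. dens a) = 1"
proof -
  have dens: "set_integrable lborel {0..} dens"
    unfolding dens_def
    by (rule set_integrable_bounded_mult[OF set_integrable_surv[OF assms] measurable_g abs_g_le]) auto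
  have lim: "((\<lambda>b. LINT a:{0..b}|lborel. dens a) \<longlongrightarrow> (LINT a:{0..}|lborel. dens a)) at_top"
    by (rule tendsto_set_lebesgue_integral_at_top[OF _ dens]) auto
  have "((\<lambda>b. LINT a:{0..b}|lborel. dens a) \<longlongrightarrow> 1 - 0) at_top"
  proof (rule Lim_transform_eventually)
    have "((\<lambda>b. exp (- l * b)) \<longlongrightarrow> 0) at_top"
      using l by real_asymp
    then have "(surv \<longlongrightarrow> 0) at_top"
    proof (rule tendsto_sandwich[OF _ _ tendsto_const, rotated 2])
      show "\<forall>\<^sub>F b in at_top. 0 \<le> surv b"
        using surv_pos by (simp add: less_imp_le)
      show "\<forall>\<^sub>F b in at_top. surv b \<le> exp (- l * b)"
        using eventually_ge_at_top[of 0] by eventually_elim (rule surv_le_exp[OF le_g])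
    qed
    then show "((\<lambda>b. 1 - surv b) \<longlongrightarrow> 1 - 0) at_top"
      by (intro tendsto_diff tendsto_const)
    show "\<forall>\<^sub>F b in at_top. 1 - surv b = (LINT a:{0..b}|lborel. dens a)"
      using eventually_ge_at_top[of 0] by eventually_elim (simp add: surv_eq_1_minus_cdf cdf_def)
  qed
  from tendsto_unique[OF trivial_limit_at_top_linorder lim this]
  show "(LINT a:{0..}|lborel. dens a) = 1" by simp
qed

lemma bounded_hazard_add_const: "0 \<le> l \<Longrightarrow> bounded_hazard (\<lambda>u. g u + l) (M + l)"
  by unfold_locales (auto simp: g_nonneg g_le add_nonneg_nonneg)

lemma cumhaz_add_const:
  assumes "0 \<le> l" "0 \<le> a"
  shows "bounded_hazard.cumhaz (\<lambda>u. g u + l) a = cumhaz a + l * a"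
proof -
  have "bounded_hazard.cumhaz (\<lambda>u. g u + l) a = (LINT u:{0..a}|lborel. g u + l)"
    by (simp add: bounded_hazard.cumhaz_def[OF bounded_hazard_add_const[OF assms(1)]])
  also have "\<dots> = cumhaz a + (LINT u:{0..a}|lborel. l)"
    unfolding cumhaz_def
    by (rule set_integral_add(2)[OF set_integrable_bounded_Icc[OF measurable_g abs_g_le]
          set_integrable_bounded_Icc[where M="\<bar>l\<bar>"]]) auto
  also have "(LINT u:{0..a}|lborel. l) = l * a"
    using assms(2) by (subst set_integral_const) auto
  finally show ?thesis .
qed

end

section \<open>Laplace transforms on the half-line\<close>

locale laplace_halfline =
  fixes w :: "real \<Rightarrow> real"
  assumes measurable_w[measurable]: "w \<in> borel_measurable borel"
    and w_nonneg: "\<And>x. 0 \<le> w x"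
    and set_integrable_w: "set_integrable lborel {0..} w"
begin

definition lap :: "real \<Rightarrow> real" where
  "lap l = (LINT a:{0..}|lborel. w a * exp (- l * a))"

definition w_halfline :: "real \<Rightarrow> real" where
  "w_halfline a = indicator {0..} a * w a"

lemma lap_0: "lap 0 = (LINT a:{0..}|lborel. w a)"
  by (simp add: lap_def)

lemma integrable_w_halfline: "integrable lborel w_halfline"
  using set_integrable_w unfolding set_integrable_def w_halfline_def by simp

lemma borel_measurable_w_halfline[measurable]: "w_halfline \<in> borel_measurable borel"
  unfolding w_halfline_def by measurable

lemma w_halfline_nonneg: "0 \<le> w_halfline a"
  by (simp add: w_halfline_def w_nonneg)

lemma lap_eq_integral: "lap l = (\<integral>a. w_halfline a * exp (- l * a) \<partial>lborel)"
  unfolding lap_def set_lebesgue_integral_def w_halfline_def by (simp add: mult.assoc)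

lemma abs_w_halfline_exp_le:
  assumes "0 \<le> l"
  shows "\<bar>w_halfline a * exp (- l * a)\<bar> \<le> w_halfline a"
proof (cases "0 \<le> a")
  case True
  then have "exp (- l * a) \<le> 1" using assms by simp
  then show ?thesis using w_halfline_nonneg[of a] by (simp add: abs_mult mult_left_le)
qed (simp add: w_halfline_def)

lemma integrable_w_halfline_exp: "0 \<le> l \<Longrightarrow> integrable lborel (\<lambda>a. w_halfline a * exp (- l * a))"
  by (rule Bochner_Integration.integrable_bound[OF integrable_w_halfline])
     (use abs_w_halfline_exp_le w_halfline_nonneg in auto)

lemma lap_tendsto:
  assumes "\<And>i. 0 \<le> X i" "X \<longlonglongrightarrow> l"
  shows "(\<lambda>i. lap (X i)) \<longlonglongrightarrow> lap l"
  unfolding lap_eq_integral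
proof (rule integral_dominated_convergence[where w=w_halfline])
  show "AE a in lborel. (\<lambda>i. w_halfline a * exp (- X i * a)) \<longlonglongrightarrow> w_halfline a * exp (- l * a)"
    by (intro AE_I2 tendsto_intros assms)
  show "AE a in lborel. norm (w_halfline a * exp (- X i * a)) \<le> w_halfline a" for i
    using abs_w_halfline_exp_le[OF assms(1)] by auto
qed (auto simp: integrable_w_halfline w_halfline_def)

lemma continuous_on_lap: "continuous_on {0..} lap"
  unfolding continuous_on_sequentially
  using lap_tendsto by (auto simp: o_def)

lemma lap_tendsto_0: "(\<lambda>i. lap (real i)) \<longlonglongrightarrow> 0"
proof -
  have "(\<lambda>i. \<integral>a. w_halfline a * exp (- real i * a) \<partial>lborel) \<longlonglongrightarrow> (\<integral>(a::real). (0::real) \<partial>lborel)"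
  proof (rule integral_dominated_convergence[where w=w_halfline])
    show "AE a in lborel. (\<lambda>i. w_halfline a * exp (- real i * a)) \<longlonglongrightarrow> 0"
      using AE_lborel_singleton[of 0]
    proof (rule AE_mp, intro AE_I2 impI)
      fix a :: real
      assume "a \<noteq> 0"
      show "(\<lambda>i. w_halfline a * exp (- real i * a)) \<longlonglongrightarrow> 0"
      proof (cases "a > 0")
        case True
        then have "(\<lambda>i. exp (- real i * a)) \<longlonglongrightarrow> 0" by real_asymp
        then show ?thesis using tendsto_mult_right_zero by blast
      next
        case False
        then show ?thesis using \<open>a \<noteq> 0\<close> by (simp add: w_halfline_def)
      qed
    qed
    show "AE a in lborel. norm (w_halfline a * exp (- real i * a)) \<le> w_halfline a" for i
      using abs_w_halfline_exp_le[of "real i"] by auto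
  qed (auto simp: integrable_w_halfline)
  then show ?thesis unfolding lap_eq_integral by simp
qed

lemma lap_strict_antimono:
  assumes w_pos: "0 < (LINT a:{0..}|lborel. w a)" and l: "0 \<le> l1" "l1 < l2"
  shows "lap l2 < lap l1"
proof -
  let ?d = "\<lambda>a. w_halfline a * exp (- l1 * a) - w_halfline a * exp (- l2 * a)"
  have d_integrable: "integrable lborel ?d" using integrable_w_halfline_exp l by auto
  have d_nonneg: "0 \<le> ?d a" for a
  proof (cases "0 \<le> a")
    case True
    then have "exp (- l2 * a) \<le> exp (- l1 * a)" using l by (simp add: mult_right_mono)
    then show ?thesis using w_halfline_nonneg[of a] by (simp add: mult_left_mono)
  qed (simp add: w_halfline_def)
  have "integral\<^sup>L lborel ?d \<noteq> 0"
  proof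
    assume "integral\<^sup>L lborel ?d = 0"
    then have "AE a in lborel. ?d a = 0"
      using integral_nonneg_eq_0_iff_AE[OF d_integrable] d_nonneg by simp
    then have "AE a in lborel. w_halfline a = 0"
      using AE_lborel_singleton[of 0]
    proof eventually_elim
      case (elim a)
      show ?case
      proof (cases "0 < a")
        case True
        then have "exp (- l2 * a) < exp (- l1 * a)" using l by simp
        then show ?thesis using elim l by (simp add: right_diff_distrib[symmetric])
      qed (use elim in \<open>simp add: w_halfline_def\<close>)
    qed
    then have "integral\<^sup>L lborel w_halfline = 0"
      by (simp add: integral_eq_zero_AE)
    then show False
      using w_pos by (simp add: set_lebesgue_integral_def w_halfline_def[abs_def])
  qed
  moreover have "lap l1 - lap l2 = integral\<^sup>L lborel ?d"
    unfolding lap_eq_integral using integrable_w_halfline_exp l by simp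
  moreover have "0 \<le> integral\<^sup>L lborel ?d" using d_nonneg by simp
  ultimately show ?thesis by linarith
qed

lemma lap_inj:
  assumes "0 < (LINT a:{0..}|lborel. w a)" "0 \<le> l1" "0 \<le> l2" "lap l1 = lap l2"
  shows "l1 = l2"
  using lap_strict_antimono[OF assms(1)] assms(2-4) by (metis linorder_neq_iff order.irrefl)

lemma lap_eq_1_exists:
  assumes w_gt_1: "1 < (LINT a:{0..}|lborel. w a)"
  obtains l where "0 < l" "lap l = 1"
proof -
  obtain N where N: "lap (real N) < 1"
    using order_tendstoD(2)[OF lap_tendsto_0, of 1] by (auto simp: eventually_sequentially)
  have "\<exists>l. 0 \<le> l \<and> l \<le> real N \<and> lap l = 1"
    by (rule IVT2') (use N w_gt_1 lap_0 continuous_on_subset[OF continuous_on_lap] in auto)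
  then obtain l where "0 \<le> l" "lap l = 1" by auto
  moreover have "l \<noteq> 0" using \<open>lap l = 1\<close> lap_0 w_gt_1 by auto
  ultimately show thesis by (intro that[of l]) auto
qed

end

section \<open>The stationary balance of the second class\<close>

text \<open>With \<open>\<integral> k n\<^sub>1 = A N\<^sub>1\<close>, the stationary equation for \<open>N\<^sub>2\<close> reads
  \<open>balance A d eta1 eta2 ct1 ct2 N\<^sub>1 N\<^sub>2 = 0\<close>.\<close>
definition balance :: "real \<Rightarrow> real \<Rightarrow> real \<Rightarrow> real \<Rightarrow> real \<Rightarrow> real \<Rightarrow> real \<Rightarrow> real \<Rightarrow> real" where
  "balance A d eta1 eta2 ct1 ct2 x y = (d + ct1 * x + ct2 * y) * y - (A + eta1 * x + eta2 * y) * x"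

text \<open>In this locale \<open>c1\<close> and \<open>c2\<close> stand for the totals \<open>eta1 + c1\<close> and \<open>eta2 + c2\<close>.\<close>
locale stationary_balance =
  fixes c1 c2 lam A d eta1 eta2 ct1 ct2 :: real
  assumes c1: "0 < c1" and c2: "0 \<le> c2" and lam: "0 < lam" and A: "0 < A" and d: "0 < d"
    and eta1: "0 \<le> eta1" and eta2: "0 \<le> eta2" and ct1: "0 \<le> ct1" and ct2: "0 \<le> ct2"
    and eta2_le_c2: "eta2 \<le> c2"
begin

abbreviation Phi :: "real \<Rightarrow> real \<Rightarrow> real" where
  "Phi \<equiv> balance A d eta1 eta2 ct1 ct2"

definition qa :: real where "qa = ct2 - (ct1 - eta2) * c2 / c1 - eta1 * c2^2 / c1^2"
definition qb :: real where "qb = d + (ct1 - eta2) * lam / c1 + A * c2 / c1 + 2 * eta1 * lam * c2 / c1^2"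
definition qc :: real where "qc = - A * lam / c1 - eta1 * lam^2 / c1^2"
definition q :: "real \<Rightarrow> real" where "q y = qa * y^2 + qb * y + qc"

lemma balance_eq_q: "c1 * x + c2 * y = lam \<Longrightarrow> Phi x y = q y"
proof -
  assume "c1 * x + c2 * y = lam"
  then have x: "x = (lam - c2 * y) / c1" using c1 by (simp add: field_simps)
  show ?thesis unfolding x balance_def q_def qa_def qb_def qc_def using c1
    by (simp add: field_simps power2_eq_square)
qed

lemma qc_neg: "qc < 0"
proof -
  have "0 < A * lam / c1" using A lam c1 by simp
  moreover have "0 \<le> eta1 * lam^2 / c1^2" using eta1 by simp
  ultimately show ?thesis unfolding qc_def by linarith
qed

lemma continuous_on_q: "continuous_on S q"
  unfolding q_def by (intro continuous_intros)

lemma q_0: "q 0 < 0"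
  by (simp add: q_def qc_neg)

lemma q_pos_at_end: "0 < c2 \<Longrightarrow> 0 < q (lam / c2)"
proof -
  assume c2: "0 < c2"
  have Y: "0 < lam / c2" using lam c2 by simp
  have "q (lam / c2) = Phi 0 (lam / c2)" using balance_eq_q[of 0 "lam / c2"] c2 by simp
  also have "\<dots> = (d + ct2 * (lam / c2)) * (lam / c2)" by (simp add: balance_def)
  also have "\<dots> > 0" using Y d ct2 by (intro mult_pos_pos add_pos_nonneg mult_nonneg_nonneg) auto
  finally show ?thesis .
qed

lemma balance_root_exists: "\<exists>x y. 0 < x \<and> 0 < y \<and> c1 * x + c2 * y = lam \<and> Phi x y = 0"
proof (cases "c2 = 0")
  case True
  then have "eta2 = 0" using eta2 eta2_le_c2 by simp
  moreover have "0 \<le> ct1 * lam / c1" using ct1 lam c1 by simp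
  ultimately have qb: "0 < qb" "qa = ct2" using True d unfolding qb_def qa_def by simp_all
  define Y where "Y = - qc / qb"
  have Y: "0 < Y" using qc_neg qb by (simp add: Y_def field_simps)
  have "q Y = qa * Y^2" using qb by (simp add: q_def Y_def field_simps)
  then have "0 \<le> q Y" using qb ct2 by simp
  then obtain y where y: "0 \<le> y" "q y = 0"
    using IVT'[of q 0 0 Y] q_0 Y continuous_on_q by auto
  then have "y \<noteq> 0" using q_0 by auto
  then show ?thesis using y True lam c1 balance_eq_q[of "lam / c1" y]
    by (intro exI[of _ "lam / c1"] exI[of _ y]) auto
next
  case False
  then have c2_pos: "0 < c2" using c2 by simp
  obtain y where y: "0 \<le> y" "y \<le> lam / c2" "q y = 0"
    using IVT'[of q 0 0 "lam / c2"] q_0 q_pos_at_end[OF c2_pos] lam c2_pos continuous_on_q by auto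
  have "y \<noteq> 0" using y q_0 by auto
  have "y \<noteq> lam / c2" using y q_pos_at_end[OF c2_pos] by auto
  define x where "x = (lam - c2 * y) / c1"
  have "c2 * y < lam" using y \<open>y \<noteq> lam / c2\<close> c2_pos by (simp add: field_simps)
  then have "0 < x" using c1 by (simp add: x_def)
  moreover have "c1 * x + c2 * y = lam" using c1 by (simp add: x_def)
  ultimately show ?thesis using y \<open>y \<noteq> 0\<close> balance_eq_q[of x y]
    by (intro exI[of _ x] exI[of _ y]) auto
qed

text \<open>Two roots \<open>y < y'\<close> of \<open>q\<close> with \<open>q 0 < 0\<close> are both positive and force \<open>qa < 0\<close>; then
  \<open>q\<close> is negative beyond \<open>y'\<close>, contradicting \<open>q (lam / c2) > 0\<close>.\<close>
lemma q_no_second_root: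
  assumes y: "0 \<le> y" "y < y'" and roots: "q y = 0" "q y' = 0" and y'_le: "c2 * y' \<le> lam"
  shows False
proof -
  have "(y - y') * (qa * (y + y') + qb) = 0"
    using roots by (simp add: q_def algebra_simps power2_eq_square)
  then have qb: "qb = - qa * (y + y')" using y by simp
  have qc: "qc = qa * y * y'" using roots(1) qb by (simp add: q_def power2_eq_square algebra_simps)
  have q_factor: "q s = qa * (s - y) * (s - y')" for s
    by (simp only: q_def qb qc) (simp add: power2_eq_square algebra_simps)
  have "y \<noteq> 0" using qc qc_neg by auto
  then have "0 < y * y'" using y by simp
  moreover have "qa * (y * y') < 0" using qc qc_neg by (simp add: mult.assoc)
  ultimately have qa: "qa < 0" using mult_less_cancel_right_pos[of "y * y'" qa 0] by simp
  show False
  proof (cases "c2 = 0")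
    case True
    then show False using qa ct2 unfolding qa_def by simp
  next
    case False
    then have c2_pos: "0 < c2" using c2 by simp
    have "y' \<le> lam / c2" using y'_le c2_pos by (simp add: field_simps)
    then have "0 \<le> (lam / c2 - y) * (lam / c2 - y')" using y by simp
    then have "qa * ((lam / c2 - y) * (lam / c2 - y')) \<le> 0" using qa by (simp add: mult_nonpos_nonneg)
    then show False using q_pos_at_end[OF c2_pos] q_factor[of "lam / c2"] by (simp add: mult.assoc)
  qed
qed

lemma balance_root_unique:
  assumes "0 \<le> x" "0 \<le> y" "c1 * x + c2 * y = lam" "Phi x y = 0"
    and "0 \<le> x'" "0 \<le> y'" "c1 * x' + c2 * y' = lam" "Phi x' y' = 0"
  shows "x = x' \<and> y = y'"
proof -
  have roots: "q y = 0" "q y' = 0" using assms balance_eq_q by auto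
  have "0 \<le> c1 * x" "0 \<le> c1 * x'" using assms c1 by simp_all
  then have "c2 * y \<le> lam" "c2 * y' \<le> lam" using assms by linarith+
  then have "y = y'"
    using q_no_second_root[of y y'] q_no_second_root[of y' y] assms roots by (metis linorder_neq_iff)
  then have "c1 * x = c1 * x'" using assms(3,7) by (metis add_right_cancel)
  then show ?thesis using c1 \<open>y = y'\<close> by simp
qed

end

section \<open>Steady states of the age-structured model\<close>

lemma tot_cong: "(\<And>a. 0 \<le> a \<Longrightarrow> m a = n a) \<Longrightarrow> tot m = tot n"
  unfolding tot_def by (rule set_lebesgue_integral_cong) auto

lemma is_steady_state_cong:
  assumes k: "\<And>a. 0 \<le> a \<Longrightarrow> k' a = k a" and b: "\<And>a. 0 \<le> a \<Longrightarrow> b' a = b a"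
    and mn: "\<And>a. 0 \<le> a \<Longrightarrow> m a = n a"
  shows "is_steady_state k' b' d eta1 eta2 c1 c2 ct1 ct2 m N \<longleftrightarrow>
    is_steady_state k b d eta1 eta2 c1 c2 ct1 ct2 n N"
proof -
  have tot: "tot m = tot n" by (rule tot_cong[OF mn])
  have "set_integrable lborel {0..} m \<longleftrightarrow> set_integrable lborel {0..} n"
    by (rule set_integrable_cong) (auto simp: mn)
  moreover have "(LINT u:{0..a}|lborel. (k' u + e) * m u) = (LINT u:{0..a}|lborel. (k u + e) * n u)"
    for a e by (rule set_lebesgue_integral_cong) (auto simp: k mn)
  moreover have "(LINT a:{0..}|lborel. (k' a + e) * m a) = (LINT a:{0..}|lborel. (k a + e) * n a)"
    for e by (rule set_lebesgue_integral_cong) (auto simp: k mn)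
  moreover have "(LINT a:{0..}|lborel. b' a * m a) = (LINT a:{0..}|lborel. b a * n a)"
    by (rule set_lebesgue_integral_cong) (auto simp: b mn)
  ultimately show ?thesis
    unfolding is_steady_state_def tot using mn by (simp add: add.assoc)
qed

locale age_model = bounded_hazard k Mk for k Mk +
  fixes b :: "real \<Rightarrow> real"
  assumes measurable_b[measurable]: "b \<in> borel_measurable borel" and b_nonneg: "\<And>x. 0 \<le> b x"
    and k_int: "(\<integral>\<^sup>+a\<in>{0..}. ennreal (k a) \<partial>lborel) = \<infinity>"
    and R0_gt: "1 < (\<integral>\<^sup>+a\<in>{0..}. ennreal (b a * exp (- (\<integral>u\<in>{0..a}. k u \<partial>lborel))) \<partial>lborel)"
    and R0_fin: "(\<integral>\<^sup>+a\<in>{0..}. ennreal (b a * exp (- (\<integral>u\<in>{0..a}. k u \<partial>lborel))) \<partial>lborel) < \<infinity>"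
begin

definition net_maternity :: "real \<Rightarrow> real" where
  "net_maternity a = b a * surv a"

lemma borel_measurable_net_maternity[measurable]: "net_maternity \<in> borel_measurable borel"
  unfolding net_maternity_def by measurable

lemma
  shows set_integrable_net_maternity: "set_integrable lborel {0..} net_maternity"
    and integral_net_maternity_gt_1: "1 < (LINT a:{0..}|lborel. net_maternity a)"
proof -
  let ?f = "\<lambda>a. indicator {0..} a * net_maternity a"
  have nonneg: "0 \<le> net_maternity a" for a using b_nonneg[of a] surv_pos[of a] by (simp add: net_maternity_def)
  have R0: "(\<integral>\<^sup>+a\<in>{0..}. ennreal (b a * exp (- (\<integral>u\<in>{0..a}. k u \<partial>lborel))) \<partial>lborel)
      = (\<integral>\<^sup>+a. ennreal (?f a) \<partial>lborel)"
    by (rule nn_integral_cong) (auto simp: net_maternity_def surv_def cumhaz_def indicator_def)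
  have integrable: "integrable lborel ?f"
    by (rule integrableI_nonneg) (use R0_fin R0 nonneg in auto)
  then show "set_integrable lborel {0..} net_maternity" unfolding set_integrable_def by simp
  have "(\<integral>\<^sup>+a. ennreal (?f a) \<partial>lborel) = ennreal (integral\<^sup>L lborel ?f)"
    by (rule nn_integral_eq_integral[OF integrable]) (use nonneg in auto)
  then show "1 < (LINT a:{0..}|lborel. net_maternity a)"
    using R0_gt R0 unfolding set_lebesgue_integral_def by simp
qed

sublocale laplace_halfline net_maternity
  by unfold_locales (auto simp: net_maternity_def b_nonneg set_integrable_net_maternity less_imp_le[OF surv_pos])

text \<open>Survival when the competition rate \<open>l = (eta1 + c1) N\<^sub>1 + (eta2 + c2) N\<^sub>2\<close> is added to \<open>k\<close>.\<close>
definition S :: "real \<Rightarrow> real \<Rightarrow> real" where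
  "S l = bounded_hazard.surv (\<lambda>u. k u + l)"

definition life_exp :: "real \<Rightarrow> real" where
  "life_exp l = (LINT a:{0..}|lborel. S l a)"

definition mean_k :: "real \<Rightarrow> real" where
  "mean_k l = (LINT a:{0..}|lborel. k a * S l a) / life_exp l"

lemma S_eq:
  assumes "0 \<le> l" "0 \<le> a"
  shows "S l a = surv a * exp (- l * a)"
  using bounded_hazard.surv_def[OF bounded_hazard_add_const[OF assms(1)]] cumhaz_add_const[OF assms]
  by (simp add: S_def surv_def exp_add[symmetric])

lemma S_pos: "0 \<le> l \<Longrightarrow> 0 < S l a"
  unfolding S_def by (rule bounded_hazard.surv_pos[OF bounded_hazard_add_const])

lemma S_0: "0 \<le> l \<Longrightarrow> S l 0 = 1"
  unfolding S_def by (rule bounded_hazard.surv_0[OF bounded_hazard_add_const])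

lemma S_eq_1_minus_integral:
  assumes "0 \<le> l" "0 \<le> a"
  shows "S l a = 1 - (LINT u:{0..a}|lborel. (k u + l) * S l u)"
proof -
  interpret kl: bounded_hazard "\<lambda>u. k u + l" "Mk + l" by (rule bounded_hazard_add_const[OF assms(1)])
  show ?thesis using kl.surv_eq_1_minus_cdf[OF assms(2)] by (simp add: S_def kl.cdf_def kl.dens_def)
qed

lemma volterra_solution_eq_S:
  assumes "0 \<le> l" "set_integrable lborel {0..} n"
    and "\<And>a. 0 \<le> a \<Longrightarrow> n a = n 0 - (LINT u:{0..a}|lborel. (k u + l) * n u)" and "0 \<le> a"
  shows "n a = n 0 * S l a"
proof -
  interpret kl: bounded_hazard "\<lambda>u. k u + l" "Mk + l" by (rule bounded_hazard_add_const[OF assms(1)])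
  show ?thesis using kl.volterra_solution_eq_surv[OF assms(2-4)] by (simp add: S_def)
qed

lemma
  assumes "0 < l"
  shows set_integrable_S: "set_integrable lborel {0..} (S l)"
    and integral_hazard_S: "(LINT a:{0..}|lborel. (k a + l) * S l a) = 1"
proof -
  interpret kl: bounded_hazard "\<lambda>u. k u + l" "Mk + l" by (rule bounded_hazard_add_const) (use assms in simp)
  have "\<And>x. l \<le> k x + l" using g_nonneg by simp
  from kl.set_integrable_surv[OF assms this] kl.integral_dens_halfline[OF assms this]
  show "set_integrable lborel {0..} (S l)" "(LINT a:{0..}|lborel. (k a + l) * S l a) = 1"
    by (simp_all add: S_def kl.dens_def)
qed

lemma set_integrable_k_S: "0 < l \<Longrightarrow> set_integrable lborel {0..} (\<lambda>a. k a * S l a)"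
  by (rule set_integrable_bounded_mult[OF set_integrable_S measurable_g abs_g_le]) auto

text \<open>The only use of \<open>\<integral> k = \<infinity>\<close>: it keeps \<open>k\<close> from vanishing a.e. on the half-line.\<close>
lemma integral_k_S_pos: "0 < l \<Longrightarrow> 0 < (LINT a:{0..}|lborel. k a * S l a)"
proof -
  assume l: "0 < l"
  let ?f = "\<lambda>a. indicator {0..} a * (k a * S l a)"
  have f: "integrable lborel ?f" using set_integrable_k_S[OF l] unfolding set_integrable_def by simp
  have f_nonneg: "0 \<le> ?f a" for a using g_nonneg[of a] S_pos[of l a] l by simp
  have S_neq_0: "S l a \<noteq> 0" for a using S_pos[of l a] l by simp
  have "integral\<^sup>L lborel ?f \<noteq> 0"
  proof
    assume "integral\<^sup>L lborel ?f = 0"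
    then have "AE a in lborel. ?f a = 0" using integral_nonneg_eq_0_iff_AE[OF f] f_nonneg by simp
    then have "AE a in lborel. ennreal (k a) * indicator {0..} a = 0"
      by eventually_elim (auto simp: S_neq_0 indicator_def split: if_splits)
    then have "(\<integral>\<^sup>+a\<in>{0..}. ennreal (k a) \<partial>lborel) = 0"
      by (simp add: nn_integral_0_iff_AE)
    then show False using k_int by simp
  qed
  moreover have "0 \<le> integral\<^sup>L lborel ?f" using f_nonneg by simp
  ultimately show ?thesis unfolding set_lebesgue_integral_def by simp
qed

lemma life_exp_pos: "0 < l \<Longrightarrow> 0 < life_exp l"
proof -
  assume l: "0 < l"
  have "1 = (LINT a:{0..}|lborel. (k a + l) * S l a)" using integral_hazard_S[OF l] by simp
  also have "\<dots> \<le> (LINT a:{0..}|lborel. (Mk + l) * S l a)"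
    by (rule set_integral_mono[OF set_integrable_bounded_mult[OF set_integrable_S[OF l], of _ "Mk + l"]
          set_integrable_mult_right[OF set_integrable_S[OF l]]])
       (use g_le g_nonneg S_pos l in \<open>auto intro: mult_right_mono\<close>)
  also have "\<dots> = (Mk + l) * life_exp l" by (simp add: life_exp_def)
  finally have "1 \<le> (Mk + l) * life_exp l" .
  moreover have "0 \<le> life_exp l" unfolding life_exp_def set_lebesgue_integral_def
    using S_pos[of l] l by (intro Bochner_Integration.integral_nonneg) (simp add: less_imp_le)
  ultimately show ?thesis by (cases "life_exp l = 0") auto
qed

lemma mean_k_pos: "0 < l \<Longrightarrow> 0 < mean_k l"
  using integral_k_S_pos life_exp_pos by (simp add: mean_k_def)

lemma integral_b_S: "0 \<le> l \<Longrightarrow> (LINT a:{0..}|lborel. b a * S l a) = lap l"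
  unfolding lap_def by (rule set_lebesgue_integral_cong) (auto simp: S_eq net_maternity_def)

lemma tot_scaled_S: "tot (\<lambda>a. c * S l a) = c * life_exp l"
  by (simp add: tot_def life_exp_def)

lemma is_steady_state_scaled_S_iff:
  assumes l: "0 < l" and l_eq: "l = (eta1 + c1) * (c * life_exp l) + (eta2 + c2) * Y"
  shows "is_steady_state k b d eta1 eta2 c1 c2 ct1 ct2 (\<lambda>a. c * S l a) Y \<longleftrightarrow>
    c = c * lap l \<and> balance (mean_k l) d eta1 eta2 ct1 ct2 (c * life_exp l) Y = 0"
proof -
  define X where "X = c * life_exp l"
  have tot: "tot (\<lambda>a. c * S l a) = X" by (simp add: X_def tot_scaled_S)
  have volterra: "c * S l a = c * S l 0 -
      (LINT u:{0..a}|lborel. (k u + (eta1 + c1) * X + (eta2 + c2) * Y) * (c * S l u))" if "0 \<le> a" for a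
  proof -
    have "(LINT u:{0..a}|lborel. (k u + (eta1 + c1) * X + (eta2 + c2) * Y) * (c * S l u))
        = c * (LINT u:{0..a}|lborel. (k u + l) * S l u)"
      using l_eq by (simp add: X_def add.assoc mult.left_commute)
    then show ?thesis
      using S_eq_1_minus_integral[OF less_imp_le[OF l] that] S_0[OF less_imp_le[OF l]]
      by (simp add: right_diff_distrib)
  qed
  have renewal: "(LINT a:{0..}|lborel. b a * (c * S l a)) = c * lap l"
    using integral_b_S[of l] l by (simp add: mult.left_commute)
  have source: "(LINT a:{0..}|lborel. (k a + e) * (c * S l a)) = mean_k l * X + e * X" for e
  proof -
    have "(LINT a:{0..}|lborel. (k a + e) * (c * S l a))
        = (LINT a:{0..}|lborel. c * (k a * S l a) + (e * c) * S l a)"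
      by (rule set_lebesgue_integral_cong) (auto simp: algebra_simps)
    also have "\<dots> = c * (LINT a:{0..}|lborel. k a * S l a) + (e * c) * life_exp l"
      using set_integral_add(2)[OF set_integrable_mult_right[OF set_integrable_k_S[OF l]]
          set_integrable_mult_right[OF set_integrable_S[OF l]]]
      by (simp add: life_exp_def)
    finally show ?thesis
      using life_exp_pos[OF l] by (simp add: X_def mean_k_def)
  qed
  have N2: "(LINT a:{0..}|lborel. (k a + eta1 * X + eta2 * Y) * (c * S l a))
      = mean_k l * X + (eta1 * X + eta2 * Y) * X"
    using source[of "eta1 * X + eta2 * Y"] by (simp add: add.assoc)
  have "is_steady_state k b d eta1 eta2 c1 c2 ct1 ct2 (\<lambda>a. c * S l a) Y \<longleftrightarrow>
      c * S l 0 = c * lap l \<and> 0 = - (d + ct1 * X + ct2 * Y) * Y + (mean_k l * X + (eta1 * X + eta2 * Y) * X)"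
    unfolding is_steady_state_def tot N2 renewal
    using set_integrable_mult_right[OF set_integrable_S[OF l]] volterra by blast
  also have "\<dots> \<longleftrightarrow> c = c * lap l \<and> balance (mean_k l) d eta1 eta2 ct1 ct2 X Y = 0"
    using S_0[OF less_imp_le[OF l]] by (auto simp: balance_def algebra_simps)
  finally show ?thesis by (simp add: X_def)
qed

lemma nontrivial_steady_state_shape:
  assumes steady: "is_steady_state k b d eta1 eta2 c1 c2 ct1 ct2 m1 M2"
    and nontrivial: "nonneg_nontrivial m1 M2"
    and d: "0 < d" and params: "0 \<le> eta1" "0 \<le> eta2" "0 \<le> c1" "0 \<le> c2" "0 \<le> ct2"
  defines "l \<equiv> (eta1 + c1) * tot m1 + (eta2 + c2) * M2"
  shows "0 < l" "lap l = 1" "0 < m1 0" "\<And>a. 0 \<le> a \<Longrightarrow> m1 a = m1 0 * S l a"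
    and "tot m1 = m1 0 * life_exp l" "balance (mean_k l) d eta1 eta2 ct1 ct2 (tot m1) M2 = 0"
proof -
  have m1_nonneg: "\<And>a. 0 \<le> a \<Longrightarrow> 0 \<le> m1 a" and M2: "0 \<le> M2"
    and not_trivial: "\<not> ((\<forall>a\<ge>0. m1 a = 0) \<and> M2 = 0)"
    using nontrivial unfolding nonneg_nontrivial_def by auto
  have "0 \<le> tot m1" unfolding tot_def set_lebesgue_integral_def
    by (rule Bochner_Integration.integral_nonneg) (simp add: m1_nonneg indicator_def)
  then have l_nonneg: "0 \<le> l" using M2 params by (simp add: l_def)
  have integrable: "set_integrable lborel {0..} m1"
    using steady unfolding is_steady_state_def by blast
  have volterra: "m1 a = m1 0 - (LINT u:{0..a}|lborel. (k u + l) * m1 u)" if "0 \<le> a" for a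
    using steady that unfolding is_steady_state_def l_def add.assoc by blast
  show shape: "m1 a = m1 0 * S l a" if "0 \<le> a" for a
    by (rule volterra_solution_eq_S[OF l_nonneg integrable volterra that])
  have steady_S: "is_steady_state k b d eta1 eta2 c1 c2 ct1 ct2 (\<lambda>a. m1 0 * S l a) M2"
    using steady is_steady_state_cong[OF refl refl shape[symmetric]] by simp
  show tot: "tot m1 = m1 0 * life_exp l"
    using tot_cong[of m1 "\<lambda>a. m1 0 * S l a", OF shape] tot_scaled_S by simp
  show c_pos: "0 < m1 0"
  proof (rule ccontr)
    assume "\<not> 0 < m1 0"
    then have c: "m1 0 = 0" using m1_nonneg[of 0] by simp
    have "0 = - (d + ct1 * tot m1 + ct2 * M2) * M2
        + (LINT a:{0..}|lborel. (k a + eta1 * tot m1 + eta2 * M2) * m1 a)"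
      using steady unfolding is_steady_state_def by blast
    moreover have "(LINT a:{0..}|lborel. (k a + eta1 * tot m1 + eta2 * M2) * m1 a) = 0"
      using shape[unfolded c] by (simp add: set_lebesgue_integral_cong[where g="\<lambda>_. 0"])
    ultimately have "0 = - (d + ct2 * M2) * M2" using tot c by simp
    moreover have "0 < d + ct2 * M2" using d params M2 by (simp add: add_pos_nonneg)
    ultimately have "M2 = 0" by simp
    then show False using not_trivial shape[unfolded c] by simp
  qed
  have "m1 0 * S l 0 = (LINT a:{0..}|lborel. b a * (m1 0 * S l a))"
    using steady_S unfolding is_steady_state_def by blast
  then have "m1 0 = (LINT a:{0..}|lborel. b a * (m1 0 * S l a))"
    using S_0[OF l_nonneg] by simp
  also have "\<dots> = m1 0 * lap l"
    by (subst mult.left_commute) (simp add: integral_b_S[OF l_nonneg])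
  finally show lap: "lap l = 1" using c_pos by simp
  have "l \<noteq> 0" using lap lap_0 integral_net_maternity_gt_1 by auto
  then show l_pos: "0 < l" using l_nonneg by simp
  have "l = (eta1 + c1) * (m1 0 * life_exp l) + (eta2 + c2) * M2"
    using l_def[THEN meta_eq_to_obj_eq] unfolding tot .
  from is_steady_state_scaled_S_iff[OF l_pos this] steady_S
  show "balance (mean_k l) d eta1 eta2 ct1 ct2 (tot m1) M2 = 0" by (simp add: tot)
qed

lemma nontrivial_steady_state_unique:
  assumes "is_steady_state k b d eta1 eta2 c1 c2 ct1 ct2 m1 M2" "nonneg_nontrivial m1 M2"
    and "is_steady_state k b d eta1 eta2 c1 c2 ct1 ct2 n1 N2" "nonneg_nontrivial n1 N2"
    and d: "0 < d" and params: "0 \<le> eta1" "0 \<le> eta2" "0 \<le> c1" "0 \<le> c2" "0 \<le> ct1" "0 \<le> ct2"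
    and c1tot: "0 < eta1 + c1"
  shows "(\<forall>a\<ge>0. m1 a = n1 a) \<and> M2 = N2"
proof -
  define l where "l = (eta1 + c1) * tot n1 + (eta2 + c2) * N2"
  define l' where "l' = (eta1 + c1) * tot m1 + (eta2 + c2) * M2"
  note m = nontrivial_steady_state_shape[OF assms(1,2) d params(1-4,6), folded l'_def]
  note n = nontrivial_steady_state_shape[OF assms(3,4) d params(1-4,6), folded l_def]
  have "l' = l"
    by (rule lap_inj) (use integral_net_maternity_gt_1 m(1,2) n(1,2) in auto)
  note m = m[unfolded \<open>l' = l\<close>]
  interpret stationary_balance "eta1 + c1" "eta2 + c2" l "mean_k l" d eta1 eta2 ct1 ct2
    using params c1tot d n(1) mean_k_pos[OF n(1)] by unfold_locales auto
  have "0 \<le> tot m1" "0 \<le> tot n1"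
    using m(3) m(5) n(3,5) life_exp_pos[OF n(1)] by simp_all
  moreover have "0 \<le> M2" "0 \<le> N2"
    using assms(2,4) by (simp_all add: nonneg_nontrivial_def)
  moreover have "(eta1 + c1) * tot m1 + (eta2 + c2) * M2 = l"
    using \<open>l' = l\<close> by (simp add: l'_def)
  ultimately have "tot m1 = tot n1 \<and> M2 = N2"
    using balance_root_unique[OF _ _ _ m(6) _ _ l_def[symmetric] n(6)] by blast
  then have "m1 0 = n1 0" using m(5) n(5) life_exp_pos[OF n(1)] by simp
  show ?thesis
  proof (intro conjI allI impI)
    fix a :: real
    assume "0 \<le> a"
    show "m1 a = n1 a" using m(4)[OF \<open>0 \<le> a\<close>] n(4)[OF \<open>0 \<le> a\<close>] \<open>m1 0 = n1 0\<close> by simp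
  qed (use \<open>tot m1 = tot n1 \<and> M2 = N2\<close> in simp)
qed

lemma positive_steady_state_exists:
  assumes d: "0 < d" and params: "0 \<le> eta1" "0 \<le> eta2" "0 \<le> c1" "0 \<le> c2" "0 \<le> ct1" "0 \<le> ct2"
    and c1tot: "0 < eta1 + c1"
  obtains n1 N2 where "is_steady_state k b d eta1 eta2 c1 c2 ct1 ct2 n1 N2" "nonneg_nontrivial n1 N2"
    "0 < tot n1" "0 < N2"
proof -
  obtain lam where lam_root: "0 < lam" "lap lam = 1" using lap_eq_1_exists[OF integral_net_maternity_gt_1] .
  interpret stationary_balance "eta1 + c1" "eta2 + c2" lam "mean_k lam" d eta1 eta2 ct1 ct2
    using params c1tot d lam_root(1) mean_k_pos[OF lam_root(1)] by unfold_locales auto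
  obtain x y where root: "0 < x" "0 < y" "(eta1 + c1) * x + (eta2 + c2) * y = lam" "Phi x y = 0"
    using balance_root_exists by blast
  define c where "c = x / life_exp lam"
  have c: "0 < c" "c * life_exp lam = x"
    using root(1) life_exp_pos[OF lam_root(1)] by (simp_all add: c_def)
  have "is_steady_state k b d eta1 eta2 c1 c2 ct1 ct2 (\<lambda>a. c * S lam a) y"
    using is_steady_state_scaled_S_iff[OF lam_root(1)] root c(2) lam_root(2) by simp
  moreover have "nonneg_nontrivial (\<lambda>a. c * S lam a) y"
    using root(2) c(1) S_pos[of lam] lam_root(1) by (auto simp: nonneg_nontrivial_def less_imp_le)
  moreover have "0 < tot (\<lambda>a. c * S lam a)"
    using root(1) c(2) by (simp add: tot_scaled_S)
  ultimately show ?thesis using root(2) that by blast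
qed

end

text \<open>The locale wants \<open>k\<close> and \<open>b\<close> on all of \<open>\<real>\<close>; extending them by zero changes no
  steady-state condition, since these only involve \<open>a \<ge> 0\<close>.\<close>
lemma age_model_halfline:
  fixes k b :: "real \<Rightarrow> real"
  assumes k_meas: "set_borel_measurable lborel {0..} k"
    and b_meas: "set_borel_measurable lborel {0..} b"
    and k_nonneg: "\<forall>a\<ge>0. k a \<ge> 0" and b_nonneg: "\<forall>a\<ge>0. b a \<ge> 0"
    and k_bdd: "\<exists>M. \<forall>a\<ge>0. k a \<le> M"
    and k_int: "(\<integral>\<^sup>+a\<in>{0..}. ennreal (k a) \<partial>lborel) = \<infinity>"
    and R0_gt: "1 < (\<integral>\<^sup>+a\<in>{0..}. ennreal (b a * exp (- (\<integral>u\<in>{0..a}. k u \<partial>lborel))) \<partial>lborel)"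
    and R0_fin: "(\<integral>\<^sup>+a\<in>{0..}. ennreal (b a * exp (- (\<integral>u\<in>{0..a}. k u \<partial>lborel))) \<partial>lborel) < \<infinity>"
  shows "\<exists>M. age_model (\<lambda>x. indicator {0..} x * k x) M (\<lambda>x. indicator {0..} x * b x)"
proof -
  let ?k = "\<lambda>x. indicator {0..} x * k x" and ?b = "\<lambda>x. indicator {0..} x * b x"
  obtain M where M: "\<forall>a\<ge>0. k a \<le> M" using k_bdd by blast
  have "0 \<le> M" using M k_nonneg by force
  have K: "(\<integral>u\<in>{0..a}. ?k u \<partial>lborel) = (\<integral>u\<in>{0..a}. k u \<partial>lborel)" for a
    by (rule set_lebesgue_integral_cong) auto
  have R0: "(\<integral>\<^sup>+a\<in>{0..}. ennreal (?b a * exp (- (\<integral>u\<in>{0..a}. ?k u \<partial>lborel))) \<partial>lborel)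
      = (\<integral>\<^sup>+a\<in>{0..}. ennreal (b a * exp (- (\<integral>u\<in>{0..a}. k u \<partial>lborel))) \<partial>lborel)"
    unfolding K by (rule nn_integral_cong) (auto simp: indicator_def)
  have "age_model ?k M ?b"
  proof unfold_locales
    show "?k \<in> borel_measurable borel" "?b \<in> borel_measurable borel"
      using k_meas b_meas by (simp_all add: set_borel_measurable_def)
    show "0 \<le> ?k x" "?k x \<le> M" "0 \<le> ?b x" for x
      using k_nonneg b_nonneg M \<open>0 \<le> M\<close> by (simp_all add: indicator_def)
    have "(\<integral>\<^sup>+a\<in>{0..}. ennreal (?k a) \<partial>lborel) = (\<integral>\<^sup>+a\<in>{0..}. ennreal (k a) \<partial>lborel)"
      by (rule nn_integral_cong) (simp add: indicator_def)
    then show "(\<integral>\<^sup>+a\<in>{0..}. ennreal (?k a) \<partial>lborel) = \<infinity>" using k_int by simp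
  qed (simp_all only: R0 R0_gt R0_fin)
  then show ?thesis ..
qed

theorem theorem7:
  fixes k b :: "real \<Rightarrow> real"
    and d eta1 eta2 c1 c2 ct1 ct2 :: real
  assumes d_pos: "d > 0"
    and k_meas: "set_borel_measurable lborel {0..} k"
    and b_meas: "set_borel_measurable lborel {0..} b"
    and k_nonneg: "\<forall>a\<ge>0. k a \<ge> 0"
    and b_nonneg: "\<forall>a\<ge>0. b a \<ge> 0"
    and k_bdd: "\<exists>M. \<forall>a\<ge>0. k a \<le> M"
    and b_bdd: "\<exists>M. \<forall>a\<ge>0. b a \<le> M"
    and k_int: "(\<integral>\<^sup>+a\<in>{0..}. ennreal (k a) \<partial>lborel) = \<infinity>"
    and R0_gt: "1 < (\<integral>\<^sup>+a\<in>{0..}. ennreal (b a * exp (- (\<integral>u\<in>{0..a}. k u \<partial>lborel))) \<partial>lborel)"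
    and R0_fin: "(\<integral>\<^sup>+a\<in>{0..}. ennreal (b a * exp (- (\<integral>u\<in>{0..a}. k u \<partial>lborel))) \<partial>lborel) < \<infinity>"
    and params: "eta1 \<ge> 0" "eta2 \<ge> 0" "c1 \<ge> 0" "c2 \<ge> 0" "ct1 \<ge> 0" "ct2 \<ge> 0"
    and c1tot_pos: "eta1 + c1 > 0"
  shows "\<exists>n1 N2.
     is_steady_state k b d eta1 eta2 c1 c2 ct1 ct2 n1 N2 \<and> nonneg_nontrivial n1 N2 \<and>
     (\<forall>m1 M2. is_steady_state k b d eta1 eta2 c1 c2 ct1 ct2 m1 M2 \<and> nonneg_nontrivial m1 M2
        \<longrightarrow> (\<forall>a\<ge>0. m1 a = n1 a) \<and> M2 = N2) \<and>
     ((d > 0 \<or> ct2 > 0) \<longrightarrow> tot n1 > 0) \<and>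
     ((\<not> (AE a in lborel. a \<ge> 0 \<longrightarrow> k a = 0) \<or> eta1 > 0) \<longrightarrow> N2 > 0)"
proof -
  \<comment> \<open>Both positivity
    claims hold unconditionally, since \<open>d > 0\<close> and \<open>\<integral> k = \<infinity>\<close>.\<close>
  obtain M where "age_model (\<lambda>x. indicator {0..} x * k x) M (\<lambda>x. indicator {0..} x * b x)"
    using age_model_halfline[OF k_meas b_meas k_nonneg b_nonneg k_bdd k_int R0_gt R0_fin] by blast
  then interpret age_model "\<lambda>x. indicator {0..} x * k x" M "\<lambda>x. indicator {0..} x * b x" .
  have steady_iff: "is_steady_state (\<lambda>x. indicator {0..} x * k x) (\<lambda>x. indicator {0..} x * b x)
      d eta1 eta2 c1 c2 ct1 ct2 n N \<longleftrightarrow> is_steady_state k b d eta1 eta2 c1 c2 ct1 ct2 n N" for n N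
    by (rule is_steady_state_cong) auto
  obtain n1 N2 where n1: "is_steady_state k b d eta1 eta2 c1 c2 ct1 ct2 n1 N2" "nonneg_nontrivial n1 N2"
    and pos: "0 < tot n1" "0 < N2"
    using positive_steady_state_exists[OF d_pos params c1tot_pos] unfolding steady_iff by blast
  show ?thesis
    using n1 pos nontrivial_steady_state_unique[OF _ _ n1[folded steady_iff] d_pos params c1tot_pos]
    unfolding steady_iff by blast
qed

end
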